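(* Let $n\ge 1$ and let $G=K_{n_1,\dots,n_p}$ be a complete $p$-partite graph of order $2^n$ (so $n_1+\dots+n_p=2^n$, each $n_i\ge 1$). Then $\mathrm{dil}(G,Q_n)=n$ if at least one $n_i$ is odd, and $\mathrm{dil}(G,Q_n)\le n-1$ if all $n_i$ are even. *)

theory Defs
  imports Main
begin

definition graph_dist :: "'a set \<Rightarrow> ('a \<Rightarrow> 'a \<Rightarrow> bool) \<Rightarrow> 'a \<Rightarrow> 'a \<Rightarrow> nat" where
  "graph_dist V E x y = (LEAST k. \<exists>ps. length ps = Suc k \<and> hd ps = x \<and> last ps = y \<and>
       set ps \<subseteq> V \<and> (\<forall>i<k. E (ps ! i) (ps ! Suc i)))"

(* hypercube Q_n: vertices = subsets of {0..<n} (0/1 vectors of length n),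
   adjacent iff they differ in exactly one coordinate *)
definition cube_verts :: "nat \<Rightarrow> nat set set" where
  "cube_verts n = Pow {..<n}"

definition cube_adj :: "nat \<Rightarrow> nat set \<Rightarrow> nat set \<Rightarrow> bool" where
  "cube_adj n A B \<longleftrightarrow> A \<subseteq> {..<n} \<and> B \<subseteq> {..<n} \<and> card ((A - B) \<union> (B - A)) = 1"

(* complete p-partite graph K_{ns 0, ..., ns (p-1)}: vertex (i,j) is the j-th vertex of part i *)
definition kpart_verts :: "nat \<Rightarrow> (nat \<Rightarrow> nat) \<Rightarrow> (nat \<times> nat) set" where
  "kpart_verts p ns = {(i, j). i < p \<and> j < ns i}"

definition kpart_adj :: "(nat \<times> nat) \<Rightarrow> (nat \<times> nat) \<Rightarrow> bool" where
  "kpart_adj u v \<longleftrightarrow> fst u \<noteq> fst v"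

(* dilation of an embedding f of guest (V,E) into host (W,F): max host distance over guest edges
   (0 if the guest has no edges) *)
definition dilation :: "'a set \<Rightarrow> ('a \<Rightarrow> 'a \<Rightarrow> bool) \<Rightarrow> 'b set \<Rightarrow> ('b \<Rightarrow> 'b \<Rightarrow> bool)
    \<Rightarrow> ('a \<Rightarrow> 'b) \<Rightarrow> nat" where
  "dilation V E W F f = Sup {graph_dist W F (f u) (f v) | u v. u \<in> V \<and> v \<in> V \<and> E u v}"

definition dil :: "'a set \<Rightarrow> ('a \<Rightarrow> 'a \<Rightarrow> bool) \<Rightarrow> 'b set \<Rightarrow> ('b \<Rightarrow> 'b \<Rightarrow> bool) \<Rightarrow> nat" where
  "dil V E W F = Inf {dilation V E W F f | f. bij_betw f V W}"

end

theory Submission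
  imports Defs
begin

text \<open>
  The distance in \<open>Q\<^sub>n\<close> between two vertices is the size of their symmetric difference, so a
  bijection stretches an edge by at most \<open>n\<close>, and by exactly \<open>n\<close> iff the ends go to antipodal
  vertices. Pulling the antipodal map back along a bijection gives a fixed-point-free involution
  of the vertices of \<open>G\<close>; a part of odd size cannot be closed under it, so some edge joins two
  vertices with antipodal images and the dilation is \<open>n\<close>. If all parts are even, split each part
  into pairs and send every pair to an antipodal pair of \<open>Q\<^sub>n\<close>: antipodal images then occur only
  inside parts, which are independent, so no edge is stretched by more than \<open>n - 1\<close>.
\<close>

definition walk_of_length :: "'a set \<Rightarrow> ('a \<Rightarrow> 'a \<Rightarrow> bool) \<Rightarrow> nat \<Rightarrow> 'a \<Rightarrow> 'a \<Rightarrow> bool" where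
  "walk_of_length V E k x y \<longleftrightarrow> (\<exists>ps. length ps = Suc k \<and> hd ps = x \<and> last ps = y \<and>
       set ps \<subseteq> V \<and> (\<forall>i<k. E (ps ! i) (ps ! Suc i)))"

lemma graph_dist_eq_Least: "graph_dist V E x y = (LEAST k. walk_of_length V E k x y)"
  unfolding graph_dist_def walk_of_length_def ..

lemma walk_of_length_0 [simp]: "walk_of_length V E 0 x y \<longleftrightarrow> x = y \<and> x \<in> V"
proof
  assume "walk_of_length V E 0 x y"
  then obtain ps where "length ps = 1" "hd ps = x" "last ps = y" "set ps \<subseteq> V"
    unfolding walk_of_length_def by auto
  then show "x = y \<and> x \<in> V" by (cases ps) auto
next
  assume "x = y \<and> x \<in> V"
  then show "walk_of_length V E 0 x y" unfolding walk_of_length_def by (intro exI[of _ "[x]"]) auto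
qed

lemma walk_of_length_Suc:
  "walk_of_length V E (Suc k) x z \<longleftrightarrow> x \<in> V \<and> (\<exists>y. E x y \<and> walk_of_length V E k y z)"
proof
  assume "walk_of_length V E (Suc k) x z"
  then obtain ps where ps: "length ps = Suc (Suc k)" "hd ps = x" "last ps = z" "set ps \<subseteq> V"
      "\<forall>i<Suc k. E (ps ! i) (ps ! Suc i)"
    unfolding walk_of_length_def by blast
  then obtain qs where qs: "ps = x # qs" by (cases ps) auto
  have "qs \<noteq> []" using ps(1) qs by auto
  then have "E x (hd qs)" using ps(5) qs by (auto simp: hd_conv_nth)
  moreover have "walk_of_length V E k (hd qs) z"
    unfolding walk_of_length_def using ps qs \<open>qs \<noteq> []\<close> by (intro exI[of _ qs]) auto
  moreover have "x \<in> V" using ps qs by auto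
  ultimately show "x \<in> V \<and> (\<exists>y. E x y \<and> walk_of_length V E k y z)" by blast
next
  assume "x \<in> V \<and> (\<exists>y. E x y \<and> walk_of_length V E k y z)"
  then obtain y qs where "x \<in> V" "E x y" "length qs = Suc k" "hd qs = y" "last qs = z"
      "set qs \<subseteq> V" "\<forall>i<k. E (qs ! i) (qs ! Suc i)"
    unfolding walk_of_length_def by blast
  then show "walk_of_length V E (Suc k) x z"
    unfolding walk_of_length_def
    by (intro exI[of _ "x # qs"]) (auto simp: hd_conv_nth nth_Cons less_Suc_eq_0_disj)
qed

lemma graph_dist_le: "walk_of_length V E k x y \<Longrightarrow> graph_dist V E x y \<le> k"
  unfolding graph_dist_eq_Least by (rule Least_le)

lemma walk_of_length_graph_dist:
  "walk_of_length V E k x y \<Longrightarrow> walk_of_length V E (graph_dist V E x y) x y"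
  unfolding graph_dist_eq_Least by (rule LeastI)

lemma cube_walk_sym_diff:
  assumes "A \<subseteq> {..<n}" "B \<subseteq> {..<n}"
  shows "walk_of_length (cube_verts n) (cube_adj n) (card (sym_diff A B)) A B"
  using assms
proof (induction "card (sym_diff A B)" arbitrary: A)
  case 0
  have "finite (sym_diff A B)" using 0 by (auto intro: finite_subset)
  with 0 have "A = B" by auto
  with 0 show ?case by (simp add: cube_verts_def)
next
  case (Suc m A)
  then have "sym_diff A B \<noteq> {}" by auto
  then obtain x where x: "x \<in> sym_diff A B" by blast
  define A' where "A' = sym_diff A {x}"
  have "finite (sym_diff A B)" using Suc.prems by (auto intro: finite_subset)
  moreover have "sym_diff A' B = sym_diff A B - {x}" using x by (auto simp: A'_def)
  ultimately have "m = card (sym_diff A' B)" using Suc.hyps(2) x by simp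
  moreover have "A' \<subseteq> {..<n}" using Suc.prems x by (auto simp: A'_def)
  ultimately have "walk_of_length (cube_verts n) (cube_adj n) m A' B"
    using Suc.hyps(1) Suc.prems(2) by simp
  moreover have "sym_diff A A' = {x}" by (auto simp: A'_def)
  then have "cube_adj n A A'" using \<open>A' \<subseteq> {..<n}\<close> Suc.prems by (simp add: cube_adj_def)
  ultimately show ?case
    unfolding Suc.hyps(2)[symmetric] walk_of_length_Suc using Suc.prems by (auto simp: cube_verts_def)
qed

lemma walk_of_length_in_verts:
  "walk_of_length V E k x y \<Longrightarrow> x \<in> V \<and> y \<in> V"
  by (induction k arbitrary: x) (auto simp: walk_of_length_Suc)

lemma card_sym_diff_le_cube_walk:
  "walk_of_length (cube_verts n) (cube_adj n) k A B \<Longrightarrow> card (sym_diff A B) \<le> k"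
proof (induction k arbitrary: A)
  case 0
  then show ?case by simp
next
  case (Suc k A)
  then obtain C where C: "cube_adj n A C" "walk_of_length (cube_verts n) (cube_adj n) k C B"
    by (auto simp: walk_of_length_Suc)
  have "finite (sym_diff A C)" "finite (sym_diff C B)"
    using C walk_of_length_in_verts[OF C(2)] by (auto simp: cube_adj_def cube_verts_def intro: finite_subset)
  then have "card (sym_diff A B) \<le> card (sym_diff A C \<union> sym_diff C B)"
    by (intro card_mono) auto
  also have "\<dots> \<le> card (sym_diff A C) + card (sym_diff C B)"
    by (rule card_Un_le)
  also have "\<dots> \<le> Suc k"
    using C(1) Suc.IH[OF C(2)] by (simp add: cube_adj_def)
  finally show ?case .
qed

lemma cube_dist:
  assumes "A \<subseteq> {..<n}" "B \<subseteq> {..<n}"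
  shows "graph_dist (cube_verts n) (cube_adj n) A B = card (sym_diff A B)"
proof (rule antisym)
  have walk: "walk_of_length (cube_verts n) (cube_adj n) (card (sym_diff A B)) A B"
    using assms by (rule cube_walk_sym_diff)
  then show "graph_dist (cube_verts n) (cube_adj n) A B \<le> card (sym_diff A B)"
    by (rule graph_dist_le)
  show "card (sym_diff A B) \<le> graph_dist (cube_verts n) (cube_adj n) A B"
    using card_sym_diff_le_cube_walk[OF walk_of_length_graph_dist[OF walk]] .
qed

definition cube_antipode :: "nat \<Rightarrow> nat set \<Rightarrow> nat set" where
  "cube_antipode n A = {..<n} - A"

lemma cube_antipode_in_cube_verts [simp]: "cube_antipode n A \<in> cube_verts n"
  by (auto simp: cube_antipode_def cube_verts_def)

lemma cube_antipode_antipode [simp]: "A \<subseteq> {..<n} \<Longrightarrow> cube_antipode n (cube_antipode n A) = A"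
  by (auto simp: cube_antipode_def)

lemma cube_antipode_neq: "0 < n \<Longrightarrow> cube_antipode n A \<noteq> A"
  by (auto simp: cube_antipode_def set_eq_iff)

lemma cube_dist_le_dim:
  assumes "A \<subseteq> {..<n}" "B \<subseteq> {..<n}"
  shows "graph_dist (cube_verts n) (cube_adj n) A B \<le> n"
proof -
  have "card (sym_diff A B) \<le> card {..<n}"
    using assms by (intro card_mono) auto
  then show ?thesis using cube_dist[OF assms] by simp
qed

lemma cube_dist_eq_dim_iff:
  assumes "A \<subseteq> {..<n}" "B \<subseteq> {..<n}"
  shows "graph_dist (cube_verts n) (cube_adj n) A B = n \<longleftrightarrow> B = cube_antipode n A"
proof -
  have "card (sym_diff A B) = card {..<n} \<longleftrightarrow> sym_diff A B = {..<n}"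
    using assms card_subset_eq[of "{..<n}" "sym_diff A B"] by auto
  also have "\<dots> \<longleftrightarrow> B = cube_antipode n A"
    using assms by (auto simp: cube_antipode_def)
  finally show ?thesis using cube_dist[OF assms] by simp
qed

lemma dilation_le:
  assumes "\<And>u v. u \<in> V \<Longrightarrow> v \<in> V \<Longrightarrow> E u v \<Longrightarrow> graph_dist W F (f u) (f v) \<le> m"
  shows "dilation V E W F f \<le> m"
proof (cases "\<exists>u\<in>V. \<exists>v\<in>V. E u v")
  case True
  then show ?thesis unfolding dilation_def using assms by (intro cSup_least) auto
next
  case False
  then show ?thesis by (auto simp: dilation_def Sup_nat_def)
qed

lemma dilation_ge:
  assumes "u \<in> V" "v \<in> V" "E u v"
    and "\<And>u v. u \<in> V \<Longrightarrow> v \<in> V \<Longrightarrow> E u v \<Longrightarrow> graph_dist W F (f u) (f v) \<le> b"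
  shows "graph_dist W F (f u) (f v) \<le> dilation V E W F f"
  unfolding dilation_def using assms by (intro cSup_upper bdd_aboveI[of _ b]) auto

lemma dil_le_dilation: "bij_betw f V W \<Longrightarrow> dil V E W F \<le> dilation V E W F f"
  unfolding dil_def by (intro cInf_lower) auto

lemma dil_ge:
  assumes "\<exists>f. bij_betw f V W"
    and "\<And>f. bij_betw f V W \<Longrightarrow> m \<le> dilation V E W F f"
  shows "m \<le> dil V E W F"
  unfolding dil_def using assms by (intro cInf_greatest) auto

lemma dilation_into_cube_le_dim:
  assumes "f ` V \<subseteq> cube_verts n"
  shows "dilation V E (cube_verts n) (cube_adj n) f \<le> n"
  using assms by (intro dilation_le cube_dist_le_dim) (auto simp: cube_verts_def)

lemma dim_le_dilation_into_cube:
  assumes "f ` V \<subseteq> cube_verts n" "u \<in> V" "v \<in> V" "E u v" "f v = cube_antipode n (f u)"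
  shows "n \<le> dilation V E (cube_verts n) (cube_adj n) f"
proof -
  have in_cube: "f x \<subseteq> {..<n}" if "x \<in> V" for x
    using assms(1) that by (auto simp: cube_verts_def)
  have "graph_dist (cube_verts n) (cube_adj n) (f u) (f v) = n"
    using cube_dist_eq_dim_iff[OF in_cube[OF assms(2)] in_cube[OF assms(3)]] assms(5) by simp
  moreover have "graph_dist (cube_verts n) (cube_adj n) (f u) (f v) \<le> dilation V E (cube_verts n) (cube_adj n) f"
    by (rule dilation_ge[where E = E and b = n, OF assms(2-4)]) (simp add: cube_dist_le_dim in_cube)
  ultimately show ?thesis by simp
qed

lemma dilation_into_cube_le_dim_minus_one:
  assumes "f ` V \<subseteq> cube_verts n"
    and "\<And>u v. u \<in> V \<Longrightarrow> v \<in> V \<Longrightarrow> E u v \<Longrightarrow> f v \<noteq> cube_antipode n (f u)"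
  shows "dilation V E (cube_verts n) (cube_adj n) f \<le> n - 1"
proof (rule dilation_le)
  fix u v assume uv: "u \<in> V" "v \<in> V" "E u v"
  have "f u \<subseteq> {..<n}" "f v \<subseteq> {..<n}"
    using assms(1) uv by (auto simp: cube_verts_def)
  then have "graph_dist (cube_verts n) (cube_adj n) (f u) (f v) \<noteq> n"
      and "graph_dist (cube_verts n) (cube_adj n) (f u) (f v) \<le> n"
    using assms(2)[OF uv] by (simp_all add: cube_dist_eq_dim_iff cube_dist_le_dim)
  then show "graph_dist (cube_verts n) (cube_adj n) (f u) (f v) \<le> n - 1" by simp
qed

lemma even_card_if_fixpoint_free_involution:
  assumes "finite S" "\<And>x. x \<in> S \<Longrightarrow> \<sigma> x \<in> S \<and> \<sigma> x \<noteq> x \<and> \<sigma> (\<sigma> x) = x"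
  shows "even (card S)"
  using assms
proof (induction S rule: finite_psubset_induct)
  case (psubset S)
  show ?case
  proof (cases "S = {}")
    case False
    then obtain x where x: "x \<in> S" by blast
    let ?S' = "S - {x, \<sigma> x}"
    have "?S' \<subset> S" using x by blast
    moreover have "\<sigma> y \<in> ?S' \<and> \<sigma> y \<noteq> y \<and> \<sigma> (\<sigma> y) = y" if "y \<in> ?S'" for y
      using that psubset.prems[of y] psubset.prems[OF x] by auto
    ultimately have "even (card ?S')" by (rule psubset.IH)
    moreover have "card S = card ?S' + 2"
      using psubset.prems[OF x] x psubset.hyps card_Diff_subset[of "{x, \<sigma> x}" S] card_mono[of S "{x, \<sigma> x}"]
      by auto
    ultimately show ?thesis by simp
  qed simp
qed

lemma kpart_verts_eq_Sigma: "kpart_verts p ns = (SIGMA i:{..<p}. {..<ns i})"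
  by (auto simp: kpart_verts_def)

lemma finite_kpart_verts [simp]: "finite (kpart_verts p ns)"
  by (simp add: kpart_verts_eq_Sigma)

lemma card_kpart_verts: "card (kpart_verts p ns) = (\<Sum>i<p. ns i)"
  by (simp add: kpart_verts_eq_Sigma card_SigmaI)

lemma card_cube_verts: "card (cube_verts n) = 2 ^ n"
  by (simp add: cube_verts_def card_Pow)

lemma bij_cube_antipodal_involution:
  assumes f: "bij_betw f V (cube_verts n)" and "0 < n"
  obtains \<sigma> where "\<And>x. x \<in> V \<Longrightarrow>
    \<sigma> x \<in> V \<and> f (\<sigma> x) = cube_antipode n (f x) \<and> \<sigma> x \<noteq> x \<and> \<sigma> (\<sigma> x) = x"
proof
  fix x assume x: "x \<in> V"
  let ?\<sigma> = "\<lambda>x. inv_into V f (cube_antipode n (f x))"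
  have fx: "f x \<subseteq> {..<n}" using f x by (auto simp: bij_betw_def cube_verts_def)
  have in_V: "?\<sigma> x \<in> V" and f_\<sigma>: "f (?\<sigma> x) = cube_antipode n (f x)"
    using bij_betw_inv_into[OF f] bij_betw_inv_into_right[OF f] by (auto intro: bij_betw_apply)
  show "?\<sigma> x \<in> V \<and> f (?\<sigma> x) = cube_antipode n (f x) \<and> ?\<sigma> x \<noteq> x \<and> ?\<sigma> (?\<sigma> x) = x"
    using in_V f_\<sigma> cube_antipode_neq[OF \<open>0 < n\<close>, of "f x"] fx bij_betw_inv_into_left[OF f x]
    by auto
qed

lemma kpart_cube_antipodal_edge:
  assumes f: "bij_betw f (kpart_verts p ns) (cube_verts n)"
    and "0 < n" "i < p" "odd (ns i)"
  shows "\<exists>u\<in>kpart_verts p ns. \<exists>v\<in>kpart_verts p ns. kpart_adj u v \<and> f v = cube_antipode n (f u)"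
proof (rule ccontr)
  assume no_edge: "\<not> ?thesis"
  obtain \<sigma> where \<sigma>: "\<And>x. x \<in> kpart_verts p ns \<Longrightarrow> \<sigma> x \<in> kpart_verts p ns
      \<and> f (\<sigma> x) = cube_antipode n (f x) \<and> \<sigma> x \<noteq> x \<and> \<sigma> (\<sigma> x) = x"
    using bij_cube_antipodal_involution[OF f \<open>0 < n\<close>] by blast
  have same_part: "fst (\<sigma> x) = fst x" if "x \<in> kpart_verts p ns" for x
    using no_edge \<sigma>[OF that] that unfolding kpart_adj_def by metis
  define S where "S = {x \<in> kpart_verts p ns. fst x = i}"
  have "even (card S)"
    using \<sigma> same_part by (intro even_card_if_fixpoint_free_involution[of S \<sigma>]) (auto simp: S_def)
  moreover have "S = {i} \<times> {..<ns i}"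
    using \<open>i < p\<close> by (auto simp: S_def kpart_verts_def)
  ultimately show False using \<open>odd (ns i)\<close> by simp
qed

lemma kpart_cube_bij_antipodes_within_parts:
  assumes "0 < n" and even: "\<forall>i<p. even (ns i)" and sum: "(\<Sum>i<p. ns i) = 2 ^ n"
  obtains f where "bij_betw f (kpart_verts p ns) (cube_verts n)"
    and "\<And>u v. u \<in> kpart_verts p ns \<Longrightarrow> v \<in> kpart_verts p ns \<Longrightarrow>
           f v = cube_antipode n (f u) \<Longrightarrow> fst u = fst v"
proof -
  let ?V = "kpart_verts p ns" and ?V' = "kpart_verts p (\<lambda>i. ns i div 2)"
  define H where "H = {A \<in> cube_verts n. n - 1 \<notin> A}"
  have "{..<n - 1} = {..<n} - {n - 1}" using \<open>0 < n\<close> by auto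
  then have "H = Pow {..<n - 1}" by (auto simp: H_def cube_verts_def)
  then have card_H: "card H = 2 ^ (n - 1)" by (simp add: card_Pow)
  have "2 * (\<Sum>i<p. ns i div 2) = 2 ^ n"
    using even sum by (simp add: sum_distrib_left)
  also have "\<dots> = 2 * 2 ^ (n - 1)"
    using \<open>0 < n\<close> by (simp add: power_eq_if)
  finally have "card ?V' = card H" by (simp add: card_kpart_verts card_H)
  then obtain h where h: "bij_betw h ?V' H"
    using finite_same_card_bij[of ?V' H] by (auto simp: H_def cube_verts_def)
  define g where "g u = (fst u, snd u div 2)" for u :: "nat \<times> nat"
  \<comment> \<open>\<open>(i, 2q)\<close> goes to \<open>h (i, q)\<close> and \<open>(i, 2q + 1)\<close> to its antipode; the images of \<open>h\<close>
    avoid \<open>n - 1\<close>, so membership of \<open>n - 1\<close> records the parity and \<open>unflip\<close> recovers \<open>h (i, q)\<close>.\<close>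
  define f where "f u = (if even (snd u) then h (g u) else cube_antipode n (h (g u)))" for u
  define unflip where "unflip A = (if n - 1 \<in> A then cube_antipode n A else A)" for A
  have g_in: "g u \<in> ?V'" if "u \<in> ?V" for u
    using that even by (auto simp: g_def kpart_verts_def less_mult_imp_div_less elim!: evenE)
  have h_g: "h (g u) \<subseteq> {..<n}" "n - 1 \<notin> h (g u)" if "u \<in> ?V" for u
    using bij_betw_apply[OF h g_in[OF that]] by (auto simp: H_def cube_verts_def)
  have parity: "n - 1 \<in> f u \<longleftrightarrow> odd (snd u)" if "u \<in> ?V" for u
    using h_g[OF that] \<open>0 < n\<close> by (auto simp: f_def cube_antipode_def)
  have unflip_f: "unflip (f u) = h (g u)" if "u \<in> ?V" for u
    using h_g[OF that] parity[OF that] by (auto simp: unflip_def f_def)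
  have f_in: "f u \<subseteq> {..<n}" if "u \<in> ?V" for u
    using h_g[OF that] by (auto simp: f_def cube_antipode_def)
  have unflip_antipode: "unflip (cube_antipode n A) = unflip A" if "A \<subseteq> {..<n}" for A
    using that \<open>0 < n\<close> by (auto simp: unflip_def cube_antipode_def)
  have g_eq: "g u = g v" if "u \<in> ?V" "v \<in> ?V" "unflip (f u) = unflip (f v)" for u v
    using that unflip_f g_in bij_betw_imp_inj_on[OF h] by (metis inj_onD)
  have "inj_on f ?V"
  proof (rule inj_onI)
    fix u v assume uv: "u \<in> ?V" "v \<in> ?V" "f u = f v"
    then have "g u = g v" "even (snd u) \<longleftrightarrow> even (snd v)"
      using g_eq parity by metis+
    then show "u = v"
      by (simp add: g_def prod_eq_iff) (metis div_mult_mod_eq odd_iff_mod_2_eq_one even_iff_mod_2_eq_zero)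
  qed
  moreover have "f ` ?V = cube_verts n"
  proof (rule card_subset_eq)
    show "f ` ?V \<subseteq> cube_verts n" using f_in by (auto simp: cube_verts_def)
    show "card (f ` ?V) = card (cube_verts n)"
      using card_image[OF \<open>inj_on f ?V\<close>] by (simp add: card_kpart_verts card_cube_verts sum)
  qed (simp add: cube_verts_def)
  ultimately show ?thesis
  proof (rule that[unfolded bij_betw_def, OF conjI])
    fix u v assume uv: "u \<in> ?V" "v \<in> ?V" "f v = cube_antipode n (f u)"
    then have "g u = g v" using g_eq unflip_antipode f_in by metis
    then show "fst u = fst v" by (simp add: g_def)
  qed
qed

theorem mainTheorem4:
  fixes n p :: nat and ns :: "nat \<Rightarrow> nat"
  assumes "n \<ge> 1"
    and "\<forall>i<p. ns i \<ge> 1"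
    and "(\<Sum>i<p. ns i) = 2 ^ n"
  shows "((\<exists>i<p. odd (ns i)) \<longrightarrow>
            dil (kpart_verts p ns) kpart_adj (cube_verts n) (cube_adj n) = n)
       \<and> ((\<forall>i<p. even (ns i)) \<longrightarrow>
            dil (kpart_verts p ns) kpart_adj (cube_verts n) (cube_adj n) \<le> n - 1)"
proof -
  let ?V = "kpart_verts p ns" and ?W = "cube_verts n"
  let ?dil = "dil ?V kpart_adj ?W (cube_adj n)" and ?dilation = "dilation ?V kpart_adj ?W (cube_adj n)"
  have "0 < n" using assms(1) by simp
  have ex_bij: "\<exists>f. bij_betw f ?V ?W"
    using assms(3) by (simp add: bij_betw_iff_card card_kpart_verts card_Pow cube_verts_def)
  have "?dil = n" if odd_part: "i < p" "odd (ns i)" for i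
  proof (rule antisym)
    obtain f where f: "bij_betw f ?V ?W" using ex_bij by blast
    then show "?dil \<le> n"
      using dil_le_dilation dilation_into_cube_le_dim[OF bij_betw_imp_surj_on[OF f, THEN equalityD1]]
      by (blast intro: order_trans)
    show "n \<le> ?dil"
    proof (rule dil_ge[OF ex_bij])
      fix f assume f: "bij_betw f ?V ?W"
      then obtain u v where "u \<in> ?V" "v \<in> ?V" "kpart_adj u v" "f v = cube_antipode n (f u)"
        using kpart_cube_antipodal_edge[OF f \<open>0 < n\<close> odd_part] by blast
      then show "n \<le> ?dilation f"
        using bij_betw_imp_surj_on[OF f] by (intro dim_le_dilation_into_cube) auto
    qed
  qed
  moreover have "?dil \<le> n - 1" if all_even: "\<forall>i<p. even (ns i)"
  proof -
    obtain f where f: "bij_betw f ?V ?W"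
      and within_parts: "\<And>u v. u \<in> ?V \<Longrightarrow> v \<in> ?V \<Longrightarrow> f v = cube_antipode n (f u) \<Longrightarrow> fst u = fst v"
      using kpart_cube_bij_antipodes_within_parts[OF \<open>0 < n\<close> all_even assms(3)] by blast
    have "?dilation f \<le> n - 1"
      using bij_betw_imp_surj_on[OF f] within_parts
      by (intro dilation_into_cube_le_dim_minus_one) (auto simp: kpart_adj_def)
    then show ?thesis using dil_le_dilation[OF f, of kpart_adj "cube_adj n"] by linarith
  qed
  ultimately show ?thesis by blast
qed

end
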